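(* Let $0<p<\infty$, $0<\alpha<\infty$, and let $\beta$ be a real number with $\beta p<-1$ such that $\nu:=-(\alpha+\beta+\frac1p)>0$. Let $K>1$ be sufficiently large, $\delta_n=K^{-n}$, $f_n(z)=\delta_n^\nu(1+\delta_n-z)^\beta$ for $z\in\mathbb{D}$, $n\ge1$, and $F(z)=\sum_{n=1}^\infty|f_n(z)|$. Then there is a constant $C$ such that $(1-r)^\alpha M_p(r,F)\le C$ for every $r\in[0,1)$.
   Context: $\mathbb{D}$ is the unit disk; $(1+\delta_n-z)^\beta$ uses the principal branch (note $\mathrm{Re}(1+\delta_n-z)>0$ on $\mathbb{D}$). For a function $F$ on $\mathbb{D}$, $M_p(r,F)=\left(\int_0^{2\pi}|F(re^{i\theta})|^p\frac{d\theta}{2\pi}\right)^{1/p}$. *)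

theory Defs
  imports "HOL-Analysis.Analysis"
begin

definition Mp :: "real \<Rightarrow> real \<Rightarrow> (complex \<Rightarrow> complex) \<Rightarrow> real" where
  "Mp p r F = (integral {0..2*pi} (\<lambda>\<theta>. norm (F (of_real r * cis \<theta>)) powr p) / (2*pi)) powr (1/p)"

definition fn_lemma :: "real \<Rightarrow> real \<Rightarrow> real \<Rightarrow> nat \<Rightarrow> complex \<Rightarrow> complex" where
  "fn_lemma K \<nu> \<beta> n z =
     of_real ((K powr (- real n)) powr \<nu>) * (1 + of_real (K powr (- real n)) - z) powr (of_real \<beta>)"

definition F_lemma :: "real \<Rightarrow> real \<Rightarrow> real \<Rightarrow> complex \<Rightarrow> complex" where
  "F_lemma K \<nu> \<beta> z = of_real (\<Sum>n. norm (fn_lemma K \<nu> \<beta> (Suc n) z))"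

end

theory Submission
  imports Defs
begin

(* Write s = |1 - z| for Re z < 1. Since |1 + delta_n - z| dominates both delta_n and s, each
   term satisfies |f_n(z)| <= delta_n^nu min(delta_n^beta, s^beta). As nu + beta < 0 < nu, the
   terms with delta_n > s grow geometrically in n and the remaining ones decay geometrically, so
   F(z) is at most a constant times s^(nu + beta) = s^(-(alpha + 1/p)).
   On the circle of radius r, |1 - r e^(i theta)| is at least a constant times (1 - r) + |theta|,
   and integrating ((1 - r) + |theta|)^(-(alpha p + 1)) gives M_p(r,F)^p <= C (1 - r)^(-alpha p). *)

lemma cos_le_Maclaurin_quartic: "cos (x::real) \<le> 1 - x^2/2 + x^4/24"
proof -
  obtain t where "cos x = (\<Sum>m<4. cos_coeff m * x ^ m) + cos (t + 1/2 * real 4 * pi) / fact 4 * x ^ 4"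
    using Maclaurin_cos_expansion by blast
  moreover have "(\<Sum>m<4. cos_coeff m * x ^ m) = 1 - x^2/2"
    by (simp add: cos_coeff_def lessThan_nat_numeral)
  moreover have "cos (t + 1/2 * real 4 * pi) * x ^ 4 \<le> x^4"
    using mult_right_mono[OF cos_le_one, of "x^4"] by simp
  ultimately show ?thesis by (simp add: fact_numeral)
qed

lemma one_minus_cos_ge_sq:
  fixes x :: real
  assumes "0 \<le> x" "x \<le> pi"
  shows "x^2/16 \<le> 1 - cos x"
proof (cases "x \<le> 2")
  case True
  then have "x^2 \<le> 2^2" using assms by (intro power_mono) auto
  then have "x^2 * x^2 \<le> 4 * x^2" by (intro mult_right_mono) auto
  moreover have "x^4 = x^2 * x^2" by algebra
  ultimately show ?thesis using cos_le_Maclaurin_quartic[of x] zero_le_power2[of x] by linarith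
next
  case False
  then have "cos x \<le> 0" using assms pi_less_4 cos_ge_zero[of "pi - x"] by simp
  moreover have "x^2 \<le> 16" using assms pi_less_4 power_mono[of x 4 2] by simp
  ultimately show ?thesis by simp
qed

lemma norm_one_minus_cis_squared:
  "(norm (1 - of_real r * cis \<theta>))^2 = (1 - r)^2 + 2 * r * (1 - cos \<theta>)"
proof -
  have "(norm (1 - of_real r * cis \<theta>))^2 = (1 - r * cos \<theta>)^2 + (r * sin \<theta>)^2"
    by (simp add: cmod_power2)
  also have "\<dots> = 1 - 2 * r * cos \<theta> + r^2 * ((sin \<theta>)^2 + (cos \<theta>)^2)"
    by algebra
  finally show ?thesis by (simp add: power2_eq_square algebra_simps)
qed

lemma norm_one_minus_cis_ge:
  fixes r \<theta> :: real
  assumes r: "0 \<le> r" and \<theta>: "0 \<le> \<theta>" "\<theta> \<le> 2 * pi"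
  shows "((1 - r) + min \<theta> (2 * pi - \<theta>) / 4) / 3 \<le> norm (1 - of_real r * cis \<theta>)"
proof -
  define m where "m = min \<theta> (2 * pi - \<theta>)"
  define s where "s = norm (1 - of_real r * cis \<theta>)"
  have m: "0 \<le> m" "m \<le> pi" using \<theta> by (auto simp: m_def)
  have "1 - r \<le> s"
    using norm_triangle_ineq2[of 1 "of_real r * cis \<theta>"] r by (simp add: s_def norm_mult)
  have s2: "s^2 = (1 - r)^2 + 2 * r * (1 - cos m)"
    using \<theta> by (auto simp: s_def m_def min_def cos_diff norm_one_minus_cis_squared)
  have "((1 - r) + m / 4) / 3 \<le> s"
  proof (cases "r \<le> 1/2")
    case True
    moreover have "m / 4 \<le> 1" using m pi_less_4 by simp
    ultimately show ?thesis using \<open>1 - r \<le> s\<close> by (simp add: field_simps)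
  next
    case False
    have "1 * (1 - cos m) \<le> 2 * r * (1 - cos m)"
      using False by (intro mult_right_mono) auto
    then have "(m / 4)^2 \<le> 2 * r * (1 - cos m)"
      using one_minus_cos_ge_sq[OF m] by (simp add: power_divide)
    moreover have "((1 - r) + m / 4)^2 \<le> 2 * (1 - r)^2 + 2 * (m / 4)^2"
      using zero_le_power2[of "(1 - r) - m / 4"] by (simp add: power2_eq_square algebra_simps)
    ultimately have "((1 - r) + m / 4)^2 \<le> 2 * s^2"
      using s2 by linarith
    then have "((1 - r) + m / 4)^2 \<le> (3 * s)^2"
      by (simp add: power_mult_distrib) (use zero_le_power2[of s] in linarith)
    then have "(1 - r) + m / 4 \<le> 3 * s" by (rule power2_le_imp_le) (simp add: s_def)
    then show ?thesis by simp
  qed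
  then show ?thesis by (simp add: m_def s_def)
qed

lemma norm_real_plus_powr_le:
  fixes w :: complex and d \<beta> :: real
  assumes "0 < d" "\<beta> \<le> 0" "0 \<le> Re w" "w \<noteq> 0"
  shows "norm ((of_real d + w) powr of_real \<beta>) \<le> min (d powr \<beta>) (norm w powr \<beta>)"
proof -
  have "d \<le> norm (of_real d + w)"
    using complex_Re_le_cmod[of "of_real d + w"] assms by simp
  moreover have "(Re w)^2 \<le> (d + Re w)^2" using assms by (intro power_mono) auto
  then have "(norm w)^2 \<le> (norm (of_real d + w))^2" unfolding cmod_power2 by simp
  then have "norm w \<le> norm (of_real d + w)" by (rule power2_le_imp_le) simp
  ultimately show ?thesis
    using assms by (simp add: norm_powr_real_powr' powr_mono2')
qed

lemma suminf_le_two_geometric: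
  fixes a :: "nat \<Rightarrow> real" and q \<rho> c S :: real and m :: nat
  assumes q: "1 < q" and \<rho>: "0 \<le> \<rho>" "\<rho> < 1" and S: "0 \<le> S" and a: "\<And>n. 0 \<le> a n"
    and head: "\<And>n. n < m \<Longrightarrow> a n \<le> q ^ Suc n" "\<And>n. n < m \<Longrightarrow> q ^ Suc n \<le> S"
    and tail: "\<And>n. a n \<le> c * \<rho> ^ Suc n" "c * \<rho> ^ Suc m \<le> S"
  shows "summable a" and "suminf a \<le> (q / (q - 1) + 1 / (1 - \<rho>)) * S"
proof -
  have geom: "(\<lambda>n. c * \<rho> ^ Suc (n + k)) sums (c * \<rho> ^ Suc k / (1 - \<rho>))" for k
    using sums_mult[OF geometric_sums[of \<rho>], of "c * \<rho> ^ Suc k"] \<rho> by (simp add: power_add mult_ac)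
  show summable: "summable a"
    by (rule summable_comparison_test'[OF sums_summable[OF geom[of 0]], of 0]) (use a tail in simp)
  have head_sum: "(\<Sum>n<m. a n) \<le> q / (q - 1) * S"
  proof (cases m)
    case 0
    then show ?thesis using q S by simp
  next
    case (Suc k)
    have "(\<Sum>n<m. a n) \<le> (\<Sum>n<m. q * q ^ n)" by (intro sum_mono) (use head in simp)
    also have "\<dots> = q * (q ^ m - 1) / (q - 1)"
      using q by (simp add: sum_distrib_left[symmetric] geometric_sum)
    also have "\<dots> \<le> q * q ^ m / (q - 1)" using q by (intro divide_right_mono mult_left_mono) auto
    also have "\<dots> \<le> q * S / (q - 1)"
      using q head(2)[of k] Suc by (intro divide_right_mono mult_left_mono) auto
    finally show ?thesis by simp
  qed
  have "(\<lambda>n. a (n + m)) sums (\<Sum>n. a (n + m))"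
    by (rule summable_sums[OF summable_ignore_initial_segment[OF summable]])
  then have "(\<Sum>n. a (n + m)) \<le> c * \<rho> ^ Suc m / (1 - \<rho>)"
    by (rule sums_le[OF tail(1) _ geom])
  also have "\<dots> \<le> S / (1 - \<rho>)" using tail(2) \<rho> by (intro divide_right_mono) auto
  finally have tail_sum: "(\<Sum>n. a (n + m)) \<le> 1 / (1 - \<rho>) * S" by simp
  show "suminf a \<le> (q / (q - 1) + 1 / (1 - \<rho>)) * S"
    using suminf_split_initial_segment[OF summable, of m] head_sum tail_sum by (simp add: distrib_right)
qed

lemma lacunary_sum_le:
  fixes K \<nu> \<beta> s :: real
  assumes K: "1 < K" and \<nu>: "0 < \<nu>" and \<nu>\<beta>: "\<nu> + \<beta> < 0" and s: "0 < s"
  defines "\<delta> \<equiv> \<lambda>n. K powr - real (Suc n)" and "q \<equiv> K powr - (\<nu> + \<beta>)" and "\<rho> \<equiv> K powr - \<nu>"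
  shows "summable (\<lambda>n. \<delta> n powr \<nu> * min (\<delta> n powr \<beta>) (s powr \<beta>))" (is "summable ?a")
    and "(\<Sum>n. \<delta> n powr \<nu> * min (\<delta> n powr \<beta>) (s powr \<beta>))
           \<le> (q / (q - 1) + 1 / (1 - \<rho>)) * s powr (\<nu> + \<beta>)"
proof -
  have \<delta>_pos: "0 < \<delta> n" for n using K by (simp add: \<delta>_def)
  have \<delta>_powr: "\<delta> n powr x = (K powr - x) ^ Suc n" for n x
  proof -
    have "\<delta> n powr x = (K powr - x) powr real (Suc n)"
      unfolding \<delta>_def powr_powr by (simp add: algebra_simps)
    also have "\<dots> = (K powr - x) ^ Suc n" by (rule powr_realpow) (use K in simp)
    finally show ?thesis .
  qed
  obtain n0 where "inverse K ^ n0 < s"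
    using real_arch_pow_inv[OF s, of "inverse K"] K by (auto simp: inverse_less_1_iff)
  moreover have "\<delta> n0 = inverse K * inverse K ^ n0"
    using \<delta>_powr[of n0 1] \<delta>_pos[of n0] K by (simp add: powr_minus_divide divide_inverse)
  moreover have "inverse K * inverse K ^ n0 \<le> inverse K ^ n0"
    using K by (intro mult_left_le_one_le) (auto simp: inverse_le_1_iff)
  ultimately have "\<delta> n0 \<le> s" by linarith
  define m where "m = (LEAST n. \<delta> n \<le> s)"
  have "\<delta> m \<le> s" unfolding m_def by (rule LeastI) fact
  have before_m: "s < \<delta> n" if "n < m" for n using that not_less_Least by (force simp: m_def)
  have q: "1 < q" and \<rho>: "0 \<le> \<rho>" "\<rho> < 1" and S: "0 \<le> s powr (\<nu> + \<beta>)"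
    using K \<nu> \<nu>\<beta> by (simp_all add: q_def \<rho>_def powr_less_one)
  have a_nonneg: "0 \<le> ?a n" for n by simp
  have a_le_q: "?a n \<le> q ^ Suc n" for n
  proof -
    have "?a n \<le> \<delta> n powr \<nu> * \<delta> n powr \<beta>" by (intro mult_left_mono) auto
    then show ?thesis using \<delta>_powr[of n "\<nu> + \<beta>"] by (simp add: q_def powr_add)
  qed
  have q_le_S: "q ^ Suc n \<le> s powr (\<nu> + \<beta>)" if "n < m" for n
  proof -
    have "\<delta> n powr (\<nu> + \<beta>) \<le> s powr (\<nu> + \<beta>)"
      using before_m[OF that] \<nu>\<beta> s by (intro powr_mono2') auto
    then show ?thesis using \<delta>_powr[of n "\<nu> + \<beta>"] by (simp add: q_def)
  qed
  have a_le_\<rho>: "?a n \<le> s powr \<beta> * \<rho> ^ Suc n" for n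
  proof -
    have "?a n \<le> \<delta> n powr \<nu> * s powr \<beta>" by (intro mult_left_mono) auto
    then show ?thesis using \<delta>_powr[of n \<nu>] by (simp only: \<rho>_def mult.commute)
  qed
  have \<rho>_le_S: "s powr \<beta> * \<rho> ^ Suc m \<le> s powr (\<nu> + \<beta>)"
  proof -
    have "\<delta> m powr \<nu> \<le> s powr \<nu>" using \<open>\<delta> m \<le> s\<close> \<delta>_pos[of m] \<nu> by (intro powr_mono2) auto
    then have "s powr \<beta> * \<delta> m powr \<nu> \<le> s powr \<beta> * s powr \<nu>" by (intro mult_left_mono) auto
    then show ?thesis using \<delta>_powr[of m \<nu>] by (simp add: \<rho>_def powr_add mult.commute)
  qed
  show "summable ?a" "suminf ?a \<le> (q / (q - 1) + 1 / (1 - \<rho>)) * s powr (\<nu> + \<beta>)"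
    using suminf_le_two_geometric[OF q \<rho> S a_nonneg a_le_q q_le_S a_le_\<rho> \<rho>_le_S] by auto
qed

lemma norm_F_lemma_le:
  fixes K \<nu> \<beta> :: real
  assumes K: "1 < K" and \<nu>: "0 < \<nu>" and \<nu>\<beta>: "\<nu> + \<beta> < 0"
  obtains B where "0 \<le> B"
    and "\<And>z. Re z < 1 \<Longrightarrow> norm (F_lemma K \<nu> \<beta> z) \<le> B * norm (1 - z) powr (\<nu> + \<beta>)"
proof
  define q where "q = K powr - (\<nu> + \<beta>)"
  define \<rho> where "\<rho> = K powr - \<nu>"
  define \<delta> where "\<delta> n = K powr - real (Suc n)" for n
  have "1 < q" "\<rho> < 1" using K \<nu> \<nu>\<beta> by (simp_all add: q_def \<rho>_def powr_less_one)
  then show "0 \<le> q / (q - 1) + 1 / (1 - \<rho>)" by simp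
  fix z :: complex
  assume z: "Re z < 1"
  define s where "s = norm (1 - z)"
  have "z \<noteq> 1" using z by auto
  then have "0 < s" by (simp add: s_def)
  let ?a = "\<lambda>n. \<delta> n powr \<nu> * min (\<delta> n powr \<beta>) (s powr \<beta>)"
  have term_le: "norm (fn_lemma K \<nu> \<beta> (Suc n) z) \<le> ?a n" for n
  proof -
    have "norm (fn_lemma K \<nu> \<beta> (Suc n) z) = \<delta> n powr \<nu> * norm ((of_real (\<delta> n) + (1 - z)) powr of_real \<beta>)"
      by (simp add: fn_lemma_def \<delta>_def norm_mult add_ac diff_add_eq)
    also have "\<dots> \<le> ?a n"
      using K \<nu> \<nu>\<beta> z \<open>z \<noteq> 1\<close> norm_real_plus_powr_le[of "\<delta> n" \<beta> "1 - z"]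
      by (intro mult_left_mono) (auto simp: \<delta>_def s_def)
    finally show ?thesis .
  qed
  have summable: "summable ?a" and sum_le: "suminf ?a \<le> (q / (q - 1) + 1 / (1 - \<rho>)) * s powr (\<nu> + \<beta>)"
    using lacunary_sum_le[OF K \<nu> \<nu>\<beta> \<open>0 < s\<close>] by (simp_all add: \<delta>_def q_def \<rho>_def)
  have "summable (\<lambda>n. norm (fn_lemma K \<nu> \<beta> (Suc n) z))"
    using term_le by (intro summable_comparison_test'[OF summable]) auto
  then have "norm (F_lemma K \<nu> \<beta> z) \<le> suminf ?a"
    using term_le summable by (simp add: F_lemma_def suminf_nonneg suminf_le)
  with sum_le show "norm (F_lemma K \<nu> \<beta> z) \<le> (q / (q - 1) + 1 / (1 - \<rho>)) * norm (1 - z) powr (\<nu> + \<beta>)"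
    by (simp add: s_def)
qed

lemma has_integral_linear_powr:
  fixes a b u c q :: real
  assumes "q \<noteq> 1" "c \<noteq> 0" "a \<le> b" and pos: "\<And>x. x \<in> {a..b} \<Longrightarrow> 0 < u + c * x"
  shows "((\<lambda>x. (u + c * x) powr - q) has_integral
           ((u + c * b) powr (1 - q) - (u + c * a) powr (1 - q)) / (c * (1 - q))) {a..b}"
proof -
  define G where "G = (\<lambda>x. (u + c * x) powr (1 - q) / (c * (1 - q)))"
  have "(G has_real_derivative (u + c * x) powr - q) (at x within {a..b})" if "x \<in> {a..b}" for x
  proof -
    have "((\<lambda>x. u + c * x) has_real_derivative c) (at x)"
      by (auto intro!: derivative_eq_intros)
    from DERIV_cdivide[OF DERIV_fun_powr[OF this pos[OF that], of "1 - q"], of "c * (1 - q)"]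
    have "(G has_real_derivative (u + c * x) powr - q) (at x)"
      using assms by (simp add: G_def)
    then show ?thesis by (rule has_field_derivative_at_within)
  qed
  then have "((\<lambda>x. (u + c * x) powr - q) has_integral G b - G a) {a..b}"
    using assms by (intro fundamental_theorem_of_calculus)
      (auto simp: has_real_derivative_iff_has_vector_derivative[symmetric])
  then show ?thesis by (simp add: G_def diff_divide_distrib)
qed

lemma Mp_le_of_has_integral:
  fixes F :: "complex \<Rightarrow> complex" and h :: "real \<Rightarrow> real"
  assumes p: "0 < p" and h: "(h has_integral I) {0..2 * pi}"
    and le: "\<And>\<theta>. \<theta> \<in> {0..2 * pi} \<Longrightarrow> norm (F (of_real r * cis \<theta>)) powr p \<le> h \<theta>"
  shows "Mp p r F \<le> (I / (2 * pi)) powr (1 / p)"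
proof -
  define g where "g \<theta> = norm (F (of_real r * cis \<theta>)) powr p" for \<theta>
  have "0 \<le> integral {0..2 * pi} g \<and> integral {0..2 * pi} g \<le> I"
  \<comment> \<open>If g is not integrable, its integral is the junk value 0.\<close>
  proof (cases "g integrable_on {0..2 * pi}")
    case True
    then show ?thesis
      using le h by (auto simp: g_def intro: integral_nonneg has_integral_le[OF integrable_integral])
  next
    case False
    have "0 \<le> I" using le by (intro has_integral_nonneg[OF h]) (metis order_trans powr_ge_zero)
    with False show ?thesis by (simp add: not_integrable_integral)
  qed
  then show ?thesis
    using p unfolding Mp_def g_def[symmetric] by (intro powr_mono2 divide_right_mono) auto
qed

lemma has_integral_angular_kernel:
  fixes t q :: real
  assumes t: "0 < t" and q: "1 < q"
  obtains I where "((\<lambda>\<theta>. (t + \<theta> / 4) powr - q + (t + pi / 2 - \<theta> / 4) powr - q) has_integral I) {0..2 * pi}"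
    and "I \<le> 8 / (q - 1) * t powr (1 - q)"
proof -
  define A where "A = t powr (1 - q)"
  define B where "B = (t + pi / 2) powr (1 - q)"
  have "((\<lambda>\<theta>. (t + 1/4 * \<theta>) powr - q) has_integral
          ((t + 1/4 * (2 * pi)) powr (1 - q) - (t + 1/4 * 0) powr (1 - q)) / (1/4 * (1 - q))) {0..2 * pi}"
    using t q by (intro has_integral_linear_powr) auto
  moreover have "((t + 1/4 * (2 * pi)) powr (1 - q) - (t + 1/4 * 0) powr (1 - q)) / (1/4 * (1 - q))
      = 4 * (A - B) / (q - 1)"
    using q by (simp add: A_def B_def) (simp add: field_split_simps)
  ultimately have rising: "((\<lambda>\<theta>. (t + \<theta> / 4) powr - q) has_integral 4 * (A - B) / (q - 1)) {0..2 * pi}"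
    by simp
  have "((\<lambda>\<theta>. ((t + pi / 2) + (-1/4) * \<theta>) powr - q) has_integral
          (((t + pi / 2) + (-1/4) * (2 * pi)) powr (1 - q) - ((t + pi / 2) + (-1/4) * 0) powr (1 - q))
            / ((-1/4) * (1 - q))) {0..2 * pi}"
    using t q by (intro has_integral_linear_powr) auto
  moreover have "(((t + pi / 2) + (-1/4) * (2 * pi)) powr (1 - q) - ((t + pi / 2) + (-1/4) * 0) powr (1 - q))
      / ((-1/4) * (1 - q)) = 4 * (A - B) / (q - 1)"
    using q by (simp add: A_def B_def) (simp add: field_split_simps)
  ultimately have falling: "((\<lambda>\<theta>. (t + pi / 2 - \<theta> / 4) powr - q) has_integral 4 * (A - B) / (q - 1)) {0..2 * pi}"
    by (simp add: diff_divide_distrib)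
  show ?thesis
  proof (rule that[OF has_integral_add[OF rising falling]])
    have "4 * (A - B) / (q - 1) + 4 * (A - B) / (q - 1) = 8 / (q - 1) * (A - B)"
      by (simp add: field_simps)
    also have "\<dots> \<le> 8 / (q - 1) * A" using q by (intro mult_left_mono) (auto simp: B_def)
    finally show "4 * (A - B) / (q - 1) + 4 * (A - B) / (q - 1) \<le> 8 / (q - 1) * t powr (1 - q)"
      by (simp add: A_def)
  qed
qed

lemma norm_powr_on_circle_le:
  fixes F :: "complex \<Rightarrow> complex" and B \<gamma> p r \<theta> :: real
  assumes p: "0 < p" and \<gamma>: "0 < \<gamma>" and B: "0 \<le> B"
    and F: "\<And>z. norm z < 1 \<Longrightarrow> norm (F z) \<le> B * norm (1 - z) powr - \<gamma>"
    and r: "0 \<le> r" "r < 1" and \<theta>: "0 \<le> \<theta>" "\<theta> \<le> 2 * pi"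
  shows "norm (F (of_real r * cis \<theta>)) powr p
           \<le> B powr p * 3 powr (\<gamma> * p)
               * ((1 - r + \<theta> / 4) powr - (\<gamma> * p) + (1 - r + pi / 2 - \<theta> / 4) powr - (\<gamma> * p))"
proof -
  define q where "q = \<gamma> * p"
  define d where "d = 1 - r + min \<theta> (2 * pi - \<theta>) / 4"
  have "0 < d" using r \<theta> by (simp add: d_def add_pos_nonneg)
  have "norm (F (of_real r * cis \<theta>)) \<le> B * norm (1 - of_real r * cis \<theta>) powr - \<gamma>"
    using r by (intro F) (simp add: norm_mult)
  also have "\<dots> \<le> B * (d / 3) powr - \<gamma>"
    using norm_one_minus_cis_ge[OF _ \<theta>] r \<open>0 < d\<close> \<gamma> B
    by (intro mult_left_mono powr_mono2') (auto simp: d_def)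
  finally have "norm (F (of_real r * cis \<theta>)) powr p \<le> (B * (d / 3) powr - \<gamma>) powr p"
    using p by (intro powr_mono2) auto
  also have "\<dots> = B powr p * (d / 3) powr - q"
    using B by (simp add: powr_mult powr_powr q_def)
  also have "\<dots> = B powr p * 3 powr q * d powr - q"
  proof -
    have "(d / 3) powr - q = d powr - q / 3 powr - q"
      using \<open>0 < d\<close> by (simp add: powr_divide)
    also have "\<dots> = 3 powr q * d powr - q"
      by (subst (2) powr_minus_divide) simp
    finally show ?thesis by simp
  qed
  also have "\<dots> \<le> B powr p * 3 powr q * ((1 - r + \<theta> / 4) powr - q + (1 - r + pi / 2 - \<theta> / 4) powr - q)"
    by (intro mult_left_mono) (auto simp: d_def min_def diff_divide_distrib add_diff_eq)
  finally show ?thesis by (simp add: q_def)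
qed

lemma Mp_le_of_norm_le_powr:
  fixes F :: "complex \<Rightarrow> complex" and B \<gamma> p r :: real
  assumes p: "0 < p" and \<gamma>p: "1 < \<gamma> * p" and B: "0 \<le> B"
    and F: "\<And>z. norm z < 1 \<Longrightarrow> norm (F z) \<le> B * norm (1 - z) powr - \<gamma>"
    and r: "0 \<le> r" "r < 1"
  shows "Mp p r F \<le> (B powr p * 3 powr (\<gamma> * p) * 8 / ((\<gamma> * p - 1) * (2 * pi))) powr (1 / p)
                      * (1 - r) powr (1 / p - \<gamma>)"
proof -
  define q where "q = \<gamma> * p"
  define t where "t = 1 - r"
  have "0 < t" "1 < q" using r \<gamma>p by (auto simp: t_def q_def)
  have "0 < \<gamma>" using \<gamma>p p zero_less_mult_iff[of \<gamma> p] by auto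
  obtain I where I: "((\<lambda>\<theta>. (t + \<theta> / 4) powr - q + (t + pi / 2 - \<theta> / 4) powr - q) has_integral I) {0..2 * pi}"
    and "I \<le> 8 / (q - 1) * t powr (1 - q)"
    using has_integral_angular_kernel[OF \<open>0 < t\<close> \<open>1 < q\<close>] by blast
  have "0 \<le> I" using I by (rule has_integral_nonneg) simp
  define C where "C = B powr p * 3 powr q * 8 / ((q - 1) * (2 * pi))"
  have "0 \<le> C" using \<open>1 < q\<close> by (simp add: C_def)
  have "Mp p r F \<le> (B powr p * 3 powr q * I / (2 * pi)) powr (1 / p)"
    using norm_powr_on_circle_le[OF p \<open>0 < \<gamma>\<close> B F r]
    by (intro Mp_le_of_has_integral[OF p has_integral_mult_right[OF I]]) (auto simp: q_def t_def)
  also have "\<dots> \<le> (C * t powr (1 - q)) powr (1 / p)"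
  proof (rule powr_mono2)
    have "B powr p * 3 powr q * I / (2 * pi) \<le> B powr p * 3 powr q * (8 / (q - 1) * t powr (1 - q)) / (2 * pi)"
      using \<open>I \<le> _\<close> by (intro divide_right_mono mult_left_mono) auto
    then show "B powr p * 3 powr q * I / (2 * pi) \<le> C * t powr (1 - q)" by (simp add: C_def mult_ac)
  qed (use p \<open>0 \<le> I\<close> in auto)
  also have "\<dots> = C powr (1 / p) * t powr ((1 - q) * (1 / p))"
    using \<open>0 \<le> C\<close> \<open>0 < t\<close> by (simp add: powr_mult powr_powr)
  also have "(1 - q) * (1 / p) = 1 / p - \<gamma>" using p by (simp add: q_def field_simps)
  finally show ?thesis by (simp add: C_def q_def t_def)
qed

theorem lemma6p6:
  fixes p \<alpha> \<beta> :: real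
  assumes "0 < p" and "0 < \<alpha>" and "\<beta> * p < -1" and "-(\<alpha> + \<beta> + 1/p) > 0"
  shows "\<exists>K0>1. \<forall>K\<ge>K0. \<exists>C. \<forall>r. 0 \<le> r \<and> r < 1 \<longrightarrow>
           (1 - r) powr \<alpha> * Mp p r (F_lemma K (-(\<alpha> + \<beta> + 1/p)) \<beta>) \<le> C"
proof (rule exI[of _ 2], intro conjI allI impI)
  \<comment> \<open>The estimate holds for every K > 1; the threshold 2 is arbitrary.\<close>
  fix K :: real
  assume "2 \<le> K"
  define \<nu> where "\<nu> = -(\<alpha> + \<beta> + 1/p)"
  define \<gamma> where "\<gamma> = \<alpha> + 1/p"
  have "1 < K" "0 < \<nu>" "0 < \<gamma>" "1 < \<gamma> * p" and \<nu>\<beta>: "\<nu> + \<beta> = - \<gamma>"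
    using \<open>2 \<le> K\<close> assms by (auto simp: \<nu>_def \<gamma>_def field_simps add_pos_pos)
  obtain B where "0 \<le> B"
    and B: "\<And>z. Re z < 1 \<Longrightarrow> norm (F_lemma K \<nu> \<beta> z) \<le> B * norm (1 - z) powr (\<nu> + \<beta>)"
    using norm_F_lemma_le[OF \<open>1 < K\<close> \<open>0 < \<nu>\<close>, of \<beta>] \<nu>\<beta> \<open>0 < \<gamma>\<close> by auto
  have F: "norm (F_lemma K \<nu> \<beta> z) \<le> B * norm (1 - z) powr - \<gamma>" if "norm z < 1" for z
    using B[of z] complex_Re_le_cmod[of z] that \<nu>\<beta> by simp
  define C where "C = (B powr p * 3 powr (\<gamma> * p) * 8 / ((\<gamma> * p - 1) * (2 * pi))) powr (1 / p)"
  show "\<exists>C. \<forall>r. 0 \<le> r \<and> r < 1 \<longrightarrow> (1 - r) powr \<alpha> * Mp p r (F_lemma K (-(\<alpha> + \<beta> + 1/p)) \<beta>) \<le> C"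
  proof (intro exI[of _ C] allI impI)
    fix r :: real
    assume r: "0 \<le> r \<and> r < 1"
    have "Mp p r (F_lemma K \<nu> \<beta>) \<le> C * (1 - r) powr - \<alpha>"
      using Mp_le_of_norm_le_powr[OF \<open>0 < p\<close> \<open>1 < \<gamma> * p\<close> \<open>0 \<le> B\<close> F] r by (simp add: C_def \<gamma>_def)
    then have "(1 - r) powr \<alpha> * Mp p r (F_lemma K \<nu> \<beta>) \<le> (1 - r) powr \<alpha> * (C * (1 - r) powr - \<alpha>)"
      by (intro mult_left_mono) auto
    also have "\<dots> = C" using r by (simp add: powr_minus field_simps)
    finally show "(1 - r) powr \<alpha> * Mp p r (F_lemma K (-(\<alpha> + \<beta> + 1/p)) \<beta>) \<le> C"
      by (simp add: \<nu>_def)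
  qed
qed simp

end
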